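(* Let $0<\lambda<1$ and $g_\lambda(x)=\frac{x^{\lambda}\Gamma(x)}{\Gamma(\lambda+x)}$, $x>0$. Then $\log g_\lambda\in\mathcal S_2$, and $\log g_\lambda\notin\mathcal S_\tau$ for every $\tau\in(0,2)$.
   Context: For $\tau>0$, $\mathcal S_\tau$ (generalized Stieltjes functions of order $\tau$) is the class of functions on $(0,\infty)$ of the form $g(x)=\int_0^\infty\frac{d\mu(t)}{(t+x)^{\tau}}+c$, where $\mu$ is a positive measure on $[0,\infty)$ making the integral converge for all $x>0$ and $c\ge 0$. *)

theory Defs
  imports "HOL-Analysis.Analysis"
begin

definition gen_stieltjes :: "real \<Rightarrow> (real \<Rightarrow> real) set" where
  "gen_stieltjes \<tau> =
     {g. \<exists>(\<mu>::real measure) (c::real).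
          sets \<mu> = sets borel \<and> emeasure \<mu> {..<0} = 0 \<and> c \<ge> 0 \<and>
          (\<forall>x>0. set_integrable \<mu> {0..} (\<lambda>t. 1 / (t + x) powr \<tau>) \<and>
                  g x = (\<integral>t\<in>{0..}. 1 / (t + x) powr \<tau> \<partial>\<mu>) + c)}"

definition g_lam :: "real \<Rightarrow> real \<Rightarrow> real" where
  "g_lam l x = x powr l * Gamma x / Gamma (l + x)"

end

theory Submission
  imports Defs "HOL-Real_Asymp.Real_Asymp"
begin

text \<open>
  Let \<open>w\<close> be the 1-periodic extension to \<open>[0, \<infinity>)\<close> of the tent function that rises with
  slope \<open>1 - \<lambda>\<close> on \<open>[0, \<lambda>]\<close> and falls with slope \<open>-\<lambda>\<close> on \<open>[\<lambda>, 1]\<close>. The Gauss product for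
  \<open>\<Gamma>\<close> gives \<open>ln g\<^sub>\<lambda>(x) = \<Sum>\<^sub>k h(x + k)\<close> with \<open>h(y) = ln (y + \<lambda>) - (1 - \<lambda>) ln y - \<lambda> ln (y + 1)\<close>,
  and \<open>h(y) = \<integral>\<^sub>0\<^sup>1 tent(s) / (s + y)^2 ds\<close>. Hence \<open>ln g\<^sub>\<lambda>(x) = \<integral>\<^sub>0\<^sup>\<infinity> w(t) / (t + x)^2 dt\<close>.

  Now suppose \<open>ln g\<^sub>\<lambda>(x) = \<integral> d\<nu>(t) / (t + x)^\<tau> + c\<close> with \<open>\<tau> < 2\<close>. As \<open>ln g\<^sub>\<lambda>(x) \<le> 1/x\<close>, \<open>c = 0\<close>.
  The identity \<open>B / (t + x)^\<tau> = \<integral>\<^sub>t\<^sup>\<infinity> (s - t)^(1 - \<tau>) / (s + x)^2 ds\<close> turns this into a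
  representation of order 2 with density \<open>V(s) = \<integral>\<^bsub>[0, s)\<^esub> (s - t)^(1 - \<tau>) d\<nu>(t)\<close>. The transform
  of order 2 of a density is an iterated Laplace transform, and a Laplace transform determines
  its density (after the substitution \<open>y = exp(-u)\<close> it becomes a moment sequence on \<open>[0, 1]\<close>),
  so \<open>V = B w\<close> almost everywhere. For \<open>\<tau> \<le> 1\<close> this is absurd because \<open>V\<close> is nondecreasing and
  \<open>w\<close> is not. For \<open>1 < \<tau> < 2\<close>, integrating \<open>V\<close> against \<open>(r - s)^(\<tau> - 2)\<close> gives a multiple of
  \<open>\<nu>([0, r))\<close>, which is nondecreasing in \<open>r\<close>, whereas the same integral of \<open>w\<close> decreases at \<open>r = 1\<close>.
\<close>

section \<open>The sawtooth density and the representation of order 2\<close>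

definition tent :: "real \<Rightarrow> real \<Rightarrow> real" where
  "tent l s = (if s \<le> l then (1 - l) * s else l * (1 - s))"

definition sawtooth :: "real \<Rightarrow> real \<Rightarrow> real" where
  "sawtooth l t = (if t < 0 then 0 else tent l (frac t))"

lemma tent_nonneg: "0 \<le> l \<Longrightarrow> l \<le> 1 \<Longrightarrow> 0 \<le> s \<Longrightarrow> s \<le> 1 \<Longrightarrow> 0 \<le> tent l s"
  by (auto simp: tent_def)

lemma tent_le_1: "0 \<le> l \<Longrightarrow> l \<le> 1 \<Longrightarrow> 0 \<le> s \<Longrightarrow> s \<le> 1 \<Longrightarrow> tent l s \<le> 1"
  by (auto simp: tent_def intro: mult_le_one)

lemma sawtooth_nonneg: "0 \<le> l \<Longrightarrow> l \<le> 1 \<Longrightarrow> 0 \<le> sawtooth l t"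
  unfolding sawtooth_def using tent_nonneg[of l "frac t"] frac_lt_1[of t] frac_ge_0[of t] by auto

lemma sawtooth_le_1: "0 \<le> l \<Longrightarrow> l \<le> 1 \<Longrightarrow> sawtooth l t \<le> 1"
  unfolding sawtooth_def using tent_le_1[of l "frac t"] frac_lt_1[of t] frac_ge_0[of t] by auto

lemma sawtooth_eq_tent: "0 \<le> s \<Longrightarrow> s < 1 \<Longrightarrow> sawtooth l s = tent l s"
  by (simp add: sawtooth_def frac_eq)

lemma sawtooth_rising: "0 \<le> s \<Longrightarrow> s \<le> l \<Longrightarrow> l < 1 \<Longrightarrow> sawtooth l s = (1 - l) * s"
  by (simp add: sawtooth_eq_tent tent_def)

lemma sawtooth_falling: "0 \<le> l \<Longrightarrow> l \<le> s \<Longrightarrow> s \<le> 1 \<Longrightarrow> sawtooth l s = l * (1 - s)"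
  by (cases "s = 1") (auto simp: sawtooth_def tent_def frac_eq)

lemma borel_measurable_tent [measurable]: "tent l \<in> borel_measurable borel"
  unfolding tent_def by measurable

lemma borel_measurable_sawtooth [measurable]: "sawtooth l \<in> borel_measurable borel"
  unfolding sawtooth_def tent_def frac_def by measurable

lemma ennreal_sawtooth_split:
  "ennreal (indicator {0..} t * sawtooth l t * f t) =
     (\<Sum>k. ennreal (indicator {real k..<real k + 1} t * tent l (t - real k) * f t))"
proof (cases "t < 0")
  case True
  then show ?thesis by (simp add: indicator_def)
next
  case False
  define k0 where "k0 = nat \<lfloor>t\<rfloor>"
  have "t \<in> {real k..<real k + 1} \<longleftrightarrow> k = k0" for k
  proof -
    have "t \<in> {real k..<real k + 1} \<longleftrightarrow> \<lfloor>t\<rfloor> = int k"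
      by (simp add: floor_eq_iff)
    then show ?thesis using False by (auto simp: k0_def)
  qed
  then have "(\<Sum>k. ennreal (indicator {real k..<real k + 1} t * tent l (t - real k) * f t))
      = (\<Sum>k. if k = k0 then ennreal (tent l (t - real k) * f t) else 0)"
    by (intro suminf_cong) (simp add: indicator_def)
  also have "\<dots> = ennreal (tent l (t - real k0) * f t)"
    by (rule sums_unique[symmetric]) (rule sums_single)
  also have "t - real k0 = frac t"
    using False by (simp add: k0_def frac_def)
  finally show ?thesis using False by (simp add: sawtooth_def)
qed

definition ln_concavity_gap :: "real \<Rightarrow> real \<Rightarrow> real" where
  "ln_concavity_gap l y = ln (y + l) - (1 - l) * ln y - l * ln (y + 1)"

lemma ln_concavity_gap_has_integral:
  assumes l: "0 < l" "l < 1" and y: "0 < y"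
  shows "((\<lambda>s. tent l s / (s + y)^2) has_integral ln_concavity_gap l y) {0..1}"
proof -
  define P1 where "P1 s = (1 - l) * (ln (s + y) + y / (s + y))" for s
  define P2 where "P2 s = l * (- (1 + y) / (s + y) - ln (s + y))" for s
  have "(P1 has_real_derivative (1 - l) * s / (s + y)^2) (at s within {0..l})"
    if "s \<in> {0..l}" for s
  proof -
    have "(P1 has_real_derivative (1 - l) * (1 / (s + y) - y / (s + y)^2)) (at s within {0..l})"
      unfolding P1_def using that y
      by (auto intro!: derivative_eq_intros) (auto simp: divide_simps power2_eq_square algebra_simps)
    moreover have "1 / (s + y) - y / (s + y)^2 = s / (s + y)^2"
      using that y by (simp add: divide_simps) (simp add: power2_eq_square algebra_simps)
    ultimately show ?thesis by simp
  qed
  then have "((\<lambda>s. (1 - l) * s / (s + y)^2) has_integral (P1 l - P1 0)) {0..l}"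
    using l by (intro fundamental_theorem_of_calculus)
      (auto simp: has_real_derivative_iff_has_vector_derivative[symmetric])
  then have i1: "((\<lambda>s. tent l s / (s + y)^2) has_integral (P1 l - P1 0)) {0..l}"
    by (rule has_integral_eq[rotated]) (auto simp: tent_def)
  have "(P2 has_real_derivative l * (1 - s) / (s + y)^2) (at s within {l..1})"
    if "s \<in> {l..1}" for s
  proof -
    have "(P2 has_real_derivative l * ((1 + y) / (s + y)^2 - 1 / (s + y))) (at s within {l..1})"
      unfolding P2_def using that y l
      by (auto intro!: derivative_eq_intros) (auto simp: divide_simps power2_eq_square algebra_simps)
    moreover have "(1 + y) / (s + y)^2 - 1 / (s + y) = (1 - s) / (s + y)^2"
      using that y l by (simp add: divide_simps) (simp add: power2_eq_square algebra_simps)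
    ultimately show ?thesis by simp
  qed
  then have "((\<lambda>s. l * (1 - s) / (s + y)^2) has_integral (P2 1 - P2 l)) {l..1}"
    using l by (intro fundamental_theorem_of_calculus)
      (auto simp: has_real_derivative_iff_has_vector_derivative[symmetric])
  then have i2: "((\<lambda>s. tent l s / (s + y)^2) has_integral (P2 1 - P2 l)) {l..1}"
    by (rule has_integral_eq[rotated]) (auto simp: tent_def)
  have "((\<lambda>s. tent l s / (s + y)^2) has_integral (P1 l - P1 0) + (P2 1 - P2 l)) {0..1}"
    using l by (intro has_integral_combine[OF _ _ i1 i2]) auto
  moreover have "(P1 l - P1 0) + (P2 1 - P2 l) = ln_concavity_gap l y"
  proof -
    have "(1 - l) * (y / (l + y)) - (1 - l) - l + l * ((1 + y) / (l + y)) = 0"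
      using l y by (simp add: divide_simps) (simp add: algebra_simps)
    moreover have "y / (0 + y) = 1" "(1 + y) / (1 + y) = 1"
      using y by auto
    ultimately show ?thesis
      unfolding P1_def P2_def ln_concavity_gap_def minus_divide_left[symmetric]
      by (simp add: algebra_simps add.commute)
  qed
  ultimately show ?thesis by simp
qed

lemma ln_concavity_gap_nonneg: "0 < l \<Longrightarrow> l < 1 \<Longrightarrow> 0 < y \<Longrightarrow> 0 \<le> ln_concavity_gap l y"
  by (rule has_integral_nonneg[OF ln_concavity_gap_has_integral]) (auto intro!: divide_nonneg_nonneg tent_nonneg)

lemma sum_ln_concavity_gap:
  assumes l: "0 \<le> l" and x: "0 < x"
  shows "(\<Sum>k<Suc n. ln_concavity_gap l (x + real k)) =
     l * ln x + ln_Gamma_series x n - ln_Gamma_series (x + l) n + l * (ln (real n) - ln (x + real n + 1))"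
proof (induction n)
  case 0
  then show ?case using l x by (simp add: ln_concavity_gap_def ln_Gamma_series_def algebra_simps add.commute)
next
  case (Suc n)
  have ln_shift: "ln (z / real (Suc n) + 1) = ln (z + real (Suc n)) - ln (real (Suc n))" if "z > 0" for z
  proof -
    have "z / real (Suc n) + 1 = (z + real (Suc n)) / real (Suc n)" by (simp add: field_simps)
    then show ?thesis using that by (simp add: ln_div)
  qed
  have series_Suc: "ln_Gamma_series z (Suc n) = ln_Gamma_series z n + z * (ln (real (Suc n)) - ln (real n))
            - ln (z / real (Suc n) + 1)" for z :: real
    by (simp add: ln_Gamma_series_def algebra_simps)
  show ?case
    using Suc.IH x l ln_shift[of x] ln_shift[of "x + l"]
    by (simp add: series_Suc ln_concavity_gap_def algebra_simps add.commute add.left_commute)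
qed

lemma ln_g_lam_sums:
  assumes l: "0 \<le> l" and x: "0 < x"
  shows "(\<lambda>k. ln_concavity_gap l (x + real k)) sums ln (g_lam l x)"
proof -
  have "Gamma x > 0" "Gamma (l + x) > 0"
    using l x by (simp_all add: Gamma_real_pos)
  then have ln_g: "ln (g_lam l x) = l * ln x + ln_Gamma x - ln_Gamma (x + l)"
    using l x by (simp add: g_lam_def ln_Gamma_real_pos ln_mult ln_div ln_powr add.commute
        dual_order.strict_implies_not_eq)
  have "(\<lambda>n. l * ln x + ln_Gamma_series x n - ln_Gamma_series (x + l) n + l * (ln (real n) - ln (x + real n + 1)))
      \<longlonglongrightarrow> l * ln x + ln_Gamma x - ln_Gamma (x + l) + l * 0"
  proof (intro tendsto_intros)
    show "ln_Gamma_series x \<longlonglongrightarrow> ln_Gamma x" using x by (rule ln_Gamma_real_LIMSEQ)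
    show "ln_Gamma_series (x + l) \<longlonglongrightarrow> ln_Gamma (x + l)" using x l by (intro ln_Gamma_real_LIMSEQ) auto
    show "(\<lambda>n. ln (real n) - ln (x + real n + 1)) \<longlonglongrightarrow> 0" using x by real_asymp
  qed
  then have "(\<lambda>n. \<Sum>k<Suc n. ln_concavity_gap l (x + real k)) \<longlonglongrightarrow> ln (g_lam l x)"
    using sum_ln_concavity_gap[OF l x] ln_g by simp
  then show ?thesis unfolding sums_def using filterlim_sequentially_Suc by blast
qed

lemma ln_g_lam_nonneg: "0 < l \<Longrightarrow> l < 1 \<Longrightarrow> 0 < x \<Longrightarrow> 0 \<le> ln (g_lam l x)"
  by (rule sums_le[OF _ sums_zero ln_g_lam_sums]) (auto intro: ln_concavity_gap_nonneg)

definition stieltjes_transform :: "real \<Rightarrow> real measure \<Rightarrow> real \<Rightarrow> ennreal" where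
  "stieltjes_transform \<tau> \<nu> x = (\<integral>\<^sup>+t. ennreal (indicator {0..} t / (t + x) powr \<tau>) \<partial>\<nu>)"

lemma stieltjes_transform_density:
  assumes "P \<in> borel_measurable borel"
  shows "stieltjes_transform \<tau> (density lborel P) x =
    (\<integral>\<^sup>+t. ennreal (indicator {0..} t / (t + x) powr \<tau>) * P t \<partial>lborel)"
  unfolding stieltjes_transform_def using assms by (subst nn_integral_density) (auto simp: mult.commute)

lemma stieltjes_transform_density_cmult:
  assumes "P \<in> borel_measurable borel"
  shows "stieltjes_transform \<tau> (density lborel (\<lambda>s. c * P s)) x = c * stieltjes_transform \<tau> (density lborel P) x"
  using assms by (simp add: stieltjes_transform_density mult.left_commute nn_integral_cmult)

lemma nn_integral_tent_translate:
  assumes l: "0 < l" "l < 1" and x: "0 < x"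
  shows "(\<integral>\<^sup>+t. ennreal (indicator {real k..<real k + 1} t * tent l (t - real k) * (1 / (t + x)^2)) \<partial>lborel)
     = ennreal (ln_concavity_gap l (x + real k))"
proof -
  have "(\<integral>\<^sup>+t. ennreal (indicator {real k..<real k + 1} t * tent l (t - real k) * (1 / (t + x)^2)) \<partial>lborel)
    = (\<integral>\<^sup>+s. ennreal (indicator {real k..<real k + 1} (real k + 1 * s) * tent l (real k + 1 * s - real k)
                         * (1 / (real k + 1 * s + x)^2)) \<partial>lborel)"
    by (subst nn_integral_real_affine[where c=1 and t="real k"]) auto
  also have "\<dots> = (\<integral>\<^sup>+s. ennreal (indicator {0..1} s * (tent l s / (s + (x + real k))^2)) \<partial>lborel)"
    by (intro nn_integral_cong_AE, use AE_lborel_singleton[of 1] in eventually_elim)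
       (auto simp: indicator_def algebra_simps)
  also have "\<dots> = ennreal (ln_concavity_gap l (x + real k))"
    using l x by (intro nn_integral_has_integral_lebesgue ln_concavity_gap_has_integral)
      (auto intro!: divide_nonneg_nonneg tent_nonneg)
  finally show ?thesis .
qed

lemma stieltjes_transform_sawtooth:
  assumes l: "0 < l" "l < 1" and x: "0 < x"
  shows "stieltjes_transform 2 (density lborel (\<lambda>t. ennreal (sawtooth l t))) x = ennreal (ln (g_lam l x))"
proof -
  have "stieltjes_transform 2 (density lborel (\<lambda>t. ennreal (sawtooth l t))) x
      = (\<integral>\<^sup>+t. ennreal (indicator {0..} t / (t + x) powr 2) * ennreal (sawtooth l t) \<partial>lborel)"
    by (rule stieltjes_transform_density) measurable
  also have "\<dots> = (\<integral>\<^sup>+t. ennreal (indicator {0..} t * sawtooth l t * (1 / (t + x)^2)) \<partial>lborel)"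
    using x l by (intro nn_integral_cong) (auto simp: indicator_def ennreal_mult'[symmetric] sawtooth_nonneg)
  also have "\<dots> = (\<integral>\<^sup>+t. (\<Sum>k. ennreal (indicator {real k..<real k + 1} t * tent l (t - real k) * (1 / (t + x)^2))) \<partial>lborel)"
    by (intro nn_integral_cong) (rule ennreal_sawtooth_split)
  also have "\<dots> = (\<Sum>k. \<integral>\<^sup>+t. ennreal (indicator {real k..<real k + 1} t * tent l (t - real k) * (1 / (t + x)^2)) \<partial>lborel)"
    by (rule nn_integral_suminf) measurable
  also have "\<dots> = (\<Sum>k. ennreal (ln_concavity_gap l (x + real k)))"
    by (intro suminf_cong nn_integral_tent_translate l x)
  also have "\<dots> = ennreal (ln (g_lam l x))"
    using l x ln_g_lam_sums[of l x]
    by (subst suminf_ennreal2) (auto simp: sums_iff intro: ln_concavity_gap_nonneg)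
  finally show ?thesis .
qed

lemma has_integral_inverse_square:
  fixes x :: real
  assumes x: "0 < x"
  shows "((\<lambda>t. 1 / (t + x)^2) has_integral 1 / x) {0..}"
proof -
  define G where "G t = - 1 / (t + x)" for t
  have "(G has_real_derivative 1 / (t + x)^2) (at t within {0..y})" if "t \<in> {0..y}" for t y
    unfolding G_def using that x
    by (auto intro!: derivative_eq_intros) (auto simp: divide_simps power2_eq_square algebra_simps)
  then have "((\<lambda>t. 1 / (t + x)^2) has_integral (G y - G 0)) {0..y}" if "0 \<le> y" for y
    using that by (intro fundamental_theorem_of_calculus)
      (auto simp: has_real_derivative_iff_has_vector_derivative[symmetric])
  then have "\<forall>\<^sub>F y in at_top. integral {0..y} (\<lambda>t. 1 / (t + x)^2) = G y - G 0"
    by (intro eventually_at_top_linorderI[of 0]) (simp add: integral_unique)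
  moreover have "((\<lambda>y. G y - G 0) \<longlongrightarrow> 1 / x) at_top"
    unfolding G_def using x by real_asymp
  ultimately have "((\<lambda>y. integral {0..y} (\<lambda>t. 1 / (t + x)^2)) \<longlongrightarrow> 1 / x) at_top"
    by (simp add: filterlim_cong)
  then show ?thesis
    using x by (intro has_integral_to_inf integrable_continuous_interval continuous_intros) auto
qed

lemma ln_g_lam_le_inverse:
  assumes l: "0 < l" "l < 1" and x: "0 < x"
  shows "ln (g_lam l x) \<le> 1 / x"
proof -
  have "ennreal (ln (g_lam l x))
      = (\<integral>\<^sup>+t. ennreal (indicator {0..} t / (t + x) powr 2) * ennreal (sawtooth l t) \<partial>lborel)"
    using stieltjes_transform_sawtooth[OF l x] by (simp add: stieltjes_transform_density)
  also have "\<dots> \<le> (\<integral>\<^sup>+t. ennreal (indicator {0..} t * (1 / (t + x)^2)) \<partial>lborel)"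
    using x sawtooth_le_1[of l] l
    by (intro nn_integral_mono) (auto simp: indicator_def ennreal_mult'[symmetric] intro!: ennreal_leI divide_right_mono)
  also have "\<dots> = ennreal (1 / x)"
    using x by (intro nn_integral_has_integral_lebesgue has_integral_inverse_square) auto
  finally show ?thesis
    using x by (subst (asm) ennreal_le_iff) auto
qed

lemma set_integral_eq_iff_nn_integral:
  fixes g :: "'a \<Rightarrow> real"
  assumes [measurable]: "g \<in> borel_measurable M" "A \<in> sets M" and nonneg: "\<And>t. 0 \<le> g t"
  shows "set_integrable M A g \<and> (\<integral>t\<in>A. g t \<partial>M) = r \<longleftrightarrow>
    (\<integral>\<^sup>+t. ennreal (indicator A t * g t) \<partial>M) = ennreal r \<and> 0 \<le> r"
proof -
  have nn: "AE t in M. 0 \<le> indicator A t * g t"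
    using nonneg by simp
  show ?thesis
  proof
    assume "set_integrable M A g \<and> (\<integral>t\<in>A. g t \<partial>M) = r"
    then show "(\<integral>\<^sup>+t. ennreal (indicator A t * g t) \<partial>M) = ennreal r \<and> 0 \<le> r"
      using nn_integral_eq_integral[OF _ nn] integral_nonneg_AE[OF nn]
      by (simp add: set_integrable_def set_lebesgue_integral_def)
  next
    assume r: "(\<integral>\<^sup>+t. ennreal (indicator A t * g t) \<partial>M) = ennreal r \<and> 0 \<le> r"
    then show "set_integrable M A g \<and> (\<integral>t\<in>A. g t \<partial>M) = r"
      using integrableI_nn_integral_finite[OF _ nn] integral_eq_nn_integral[OF _ nn]
      by (simp add: set_integrable_def set_lebesgue_integral_def)
  qed
qed

lemma gen_stieltjes_iff_stieltjes_transform: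
  "g \<in> gen_stieltjes \<tau> \<longleftrightarrow>
    (\<exists>\<nu> c. sets \<nu> = sets borel \<and> emeasure \<nu> {..<0} = 0 \<and> 0 \<le> c \<and>
       (\<forall>x>0. c \<le> g x \<and> stieltjes_transform \<tau> \<nu> x = ennreal (g x - c)))"
proof -
  have "set_integrable \<nu> {0..} (\<lambda>t. 1 / (t + x) powr \<tau>) \<and> g x = (\<integral>t\<in>{0..}. 1 / (t + x) powr \<tau> \<partial>\<nu>) + c
      \<longleftrightarrow> c \<le> g x \<and> stieltjes_transform \<tau> \<nu> x = ennreal (g x - c)"
    if "sets \<nu> = sets borel" for \<nu> :: "real measure" and x c
  proof -
    have [measurable]: "(\<lambda>t. 1 / (t + x) powr \<tau>) \<in> borel_measurable \<nu>" "{0..} \<in> sets \<nu>"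
      using that by (simp_all add: measurable_cong_sets[OF that refl])
    show ?thesis
      using set_integral_eq_iff_nn_integral[of "\<lambda>t. 1 / (t + x) powr \<tau>" \<nu> "{0..}" "g x - c"]
      by (auto simp: stieltjes_transform_def)
  qed
  then show ?thesis
    unfolding gen_stieltjes_def mem_Collect_eq by blast
qed

lemma ln_g_lam_in_gen_stieltjes_2:
  assumes "0 < l" "l < 1"
  shows "(\<lambda>x. ln (g_lam l x)) \<in> gen_stieltjes 2"
proof -
  have "emeasure (density lborel (\<lambda>t. ennreal (sawtooth l t))) {..<0}
      = (\<integral>\<^sup>+t. ennreal (sawtooth l t) * indicator {..<0} t \<partial>lborel)"
    by (rule emeasure_density) measurable
  also have "\<dots> = (\<integral>\<^sup>+(t::real). 0 \<partial>lborel)"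
    by (intro nn_integral_cong) (simp add: sawtooth_def indicator_def)
  finally have "emeasure (density lborel (\<lambda>t. ennreal (sawtooth l t))) {..<0} = 0"
    by simp
  then show ?thesis
    using assms unfolding gen_stieltjes_iff_stieltjes_transform
    by (intro exI[of _ "density lborel (\<lambda>t. ennreal (sawtooth l t))"] exI[of _ 0])
      (simp add: stieltjes_transform_sawtooth ln_g_lam_nonneg)
qed

section \<open>Uniqueness of the Stieltjes transform of order 2\<close>

lemma integrable_indicator_01_continuous:
  fixes g :: "real \<Rightarrow> real"
  assumes "finite_measure M" "sets M = sets borel" "continuous_on {0..1} g"
  shows "integrable M (\<lambda>y. indicator {0..1} y * g y)"
proof -
  obtain B where "\<forall>y\<in>{0..1}. norm (g y) \<le> B"
    using compact_imp_bounded[OF compact_continuous_image[OF assms(3) compact_Icc]]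
    by (auto simp: bounded_iff)
  then have B: "\<And>y. y \<in> {0..1} \<Longrightarrow> norm (g y) \<le> B" by blast
  have "(\<lambda>y. indicator {0..1} y * g y) \<in> borel_measurable borel"
    using borel_measurable_continuous_on_indicator[OF _ assms(3)] by simp
  then have "(\<lambda>y. indicator {0..1} y * g y) \<in> borel_measurable M"
    using measurable_cong_sets[OF assms(2) refl] by blast
  moreover have "AE y in M. norm (indicator {0..1} y * g y) \<le> max B 0"
    using B by (intro AE_I2) (auto simp: indicator_def intro: le_max_iff_disj[THEN iffD2])
  ultimately show ?thesis
    by (rule finite_measure.integrable_const_bound[OF assms(1), rotated])
qed

lemma integral_indicator_01_diff_le:
  fixes \<phi> p :: "real \<Rightarrow> real"
  assumes K: "finite_measure K" "sets K = sets borel"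
    and cont: "continuous_on {0..1} \<phi>" "continuous_on {0..1} p"
    and close: "\<And>x. x \<in> {0..1} \<Longrightarrow> \<bar>\<phi> x - p x\<bar> \<le> e"
  shows "\<bar>(\<integral>y. indicator {0..1} y * \<phi> y \<partial>K) - (\<integral>y. indicator {0..1} y * p y \<partial>K)\<bar> \<le> e * measure K (space K)"
proof -
  have "(\<integral>y. indicator {0..1} y * \<phi> y \<partial>K) - (\<integral>y. indicator {0..1} y * p y \<partial>K)
      = (\<integral>y. indicator {0..1} y * (\<phi> y - p y) \<partial>K)"
    using integrable_indicator_01_continuous[OF K] cont by (simp add: right_diff_distrib)
  also have "\<bar>\<dots>\<bar> \<le> (\<integral>y. e \<partial>K)"
  proof (rule integral_abs_bound_integral)
    show "integrable K (\<lambda>y. indicator {0..1} y * (\<phi> y - p y))"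
      using cont by (intro integrable_indicator_01_continuous[OF K] continuous_intros)
    show "integrable K (\<lambda>y. e)"
      using K by (simp add: finite_measure.integrable_const)
    show "\<bar>indicator {0..1} y * (\<phi> y - p y)\<bar> \<le> e" for y
      using close[of 0] close[of y] by (auto simp: indicator_def)
  qed
  finally show ?thesis by (simp add: mult.commute)
qed

lemma integral_continuous_eq_if_moments_eq:
  fixes M N :: "real measure" and \<phi> :: "real \<Rightarrow> real"
  assumes M: "finite_measure M" "sets M = sets borel" and N: "finite_measure N" "sets N = sets borel"
    and moments: "\<And>n. (\<integral>y. indicator {0..1} y * y^n \<partial>M) = (\<integral>y. indicator {0..1} y * y^n \<partial>N)"
    and \<phi>: "continuous_on {0..1} \<phi>"
  shows "(\<integral>y. indicator {0..1} y * \<phi> y \<partial>M) = (\<integral>y. indicator {0..1} y * \<phi> y \<partial>N)"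
proof -
  define I where "I K g = (\<integral>y. indicator {0..1} y * g y \<partial>K)"
    for K :: "real measure" and g :: "real \<Rightarrow> real"
  have I_poly: "I K (\<lambda>x. \<Sum>i\<le>n. a i * x^i) = (\<Sum>i\<le>n. a i * (\<integral>y. indicator {0..1} y * y^i \<partial>K))"
    if "finite_measure K" "sets K = sets borel" for K a n
  proof -
    have "integrable K (\<lambda>y. indicator {0..1} y * y^i)" for i
      by (rule integrable_indicator_01_continuous[OF that]) (intro continuous_intros)
    then show ?thesis
      unfolding I_def by (simp add: sum_distrib_left mult.left_commute integral_sum integral_mult_right_zero)
  qed
  have "\<bar>I M \<phi> - I N \<phi>\<bar> \<le> 0 + e" if "e > 0" for e
  proof -
    define C where "C = measure M (space M) + measure N (space N) + 1"
    have C: "0 < C" "measure M (space M) + measure N (space N) \<le> C"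
      by (simp_all add: C_def add_nonneg_pos)
    obtain p where "real_polynomial_function p" and p: "\<And>x. x \<in> {0..1} \<Longrightarrow> \<bar>\<phi> x - p x\<bar> < e / C"
      using Stone_Weierstrass_real_polynomial_function[OF compact_Icc \<phi>, of "e / C"] \<open>e > 0\<close> C
      by auto
    then obtain a n where pa: "p = (\<lambda>x. \<Sum>i\<le>n. a i * x^i)"
      using real_polynomial_function_iff_sum by blast
    have "continuous_on {0..1} p" unfolding pa by (intro continuous_intros)
    then have "\<bar>I M \<phi> - I N \<phi>\<bar> \<le> e / C * measure M (space M) + e / C * measure N (space N)"
      using integral_indicator_01_diff_le[OF M \<phi>, of p "e / C"] integral_indicator_01_diff_le[OF N \<phi>, of p "e / C"]
        I_poly[OF M, of a n] I_poly[OF N, of a n] p moments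
      unfolding I_def pa by (simp add: less_imp_le)
    also have "\<dots> = e / C * (measure M (space M) + measure N (space N))"
      by (simp add: distrib_left)
    also have "\<dots> \<le> e / C * C"
      using C \<open>e > 0\<close> by (intro mult_left_mono) auto
    finally show ?thesis using C by simp
  qed
  then show ?thesis
    using field_le_epsilon[of "\<bar>I M \<phi> - I N \<phi>\<bar>" 0] by (simp add: I_def)
qed

lemma ramp_tendsto_indicator:
  "(\<lambda>k. max 0 (min 1 (real k * (y - a)))) \<longlonglongrightarrow> (indicator {a<..} y :: real)"
proof (cases "a < y")
  case True
  obtain k0 :: nat where k0: "1 / (y - a) < real k0"
    using reals_Archimedean2 by blast
  have "1 < real k * (y - a)" if "k0 \<le> k" for k
  proof -
    have "1 / (y - a) < real k" using k0 that by (meson less_le_trans of_nat_le_iff)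
    then show ?thesis using True by (simp add: field_simps)
  qed
  then have "eventually (\<lambda>k. max 0 (min 1 (real k * (y - a))) = 1) sequentially"
    by (intro eventually_sequentiallyI[of k0]) auto
  then show ?thesis using True by (simp add: tendsto_eventually)
next
  case False
  then have nonpos: "real k * (y - a) \<le> 0" for k
    by (intro mult_nonneg_nonpos) auto
  have "max 0 (min 1 (real k * (y - a))) = 0" for k
    using nonpos[of k] by (simp add: max_def min_def)
  then show ?thesis using False by simp
qed

lemma integral_indicator_01_ramp_tendsto:
  fixes K :: "real measure"
  assumes K: "finite_measure K" "sets K = sets borel"
  shows "(\<lambda>k. \<integral>y. indicator {0..1} y * max 0 (min 1 (real k * (y - a))) \<partial>K) \<longlonglongrightarrow> measure K ({0..1} \<inter> {a<..})"
proof -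
  have [measurable_cong]: "sets K = sets borel" by (fact K(2))
  have "(\<lambda>k. \<integral>y. indicator {0..1} y * max 0 (min 1 (real k * (y - a))) \<partial>K)
      \<longlonglongrightarrow> (\<integral>y. indicator {0..1} y * indicator {a<..} y \<partial>K)"
  proof (rule integral_dominated_convergence[where w="\<lambda>_. 1"])
    show "integrable K (\<lambda>_. 1::real)"
      using K by (simp add: finite_measure.integrable_const)
    show "AE y in K. norm (indicator {0..1} y * max 0 (min 1 (real k * (y - a)))) \<le> 1" for k
      by (intro AE_I2) (auto simp: indicator_def)
    show "AE y in K. (\<lambda>k. indicator {0..1} y * max 0 (min 1 (real k * (y - a))))
        \<longlonglongrightarrow> indicator {0..1} y * indicator {a<..} y"
      by (intro AE_I2 tendsto_mult tendsto_const ramp_tendsto_indicator)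
  qed measurable
  also have "(\<integral>y. indicator {0..1} y * indicator {a<..} y \<partial>K) = measure K ({0..1} \<inter> {a<..})"
    using sets_eq_imp_space_eq[OF K(2)]
    by (simp add: indicator_inter_arith[symmetric] del: integral_mult_right integral_mult_left)
  finally show ?thesis .
qed

lemma finite_measure_eq_if_moments_eq:
  fixes M N :: "real measure"
  assumes M: "finite_measure M" "sets M = sets borel" "emeasure M (- {0..1}) = 0"
    and N: "finite_measure N" "sets N = sets borel" "emeasure N (- {0..1}) = 0"
    and moments: "\<And>n. (\<integral>y. indicator {0..1} y * y^n \<partial>M) = (\<integral>y. indicator {0..1} y * y^n \<partial>N)"
  shows "M = N"
proof (rule measure_eqI_lessThan[OF M(2) N(2)])
  show "emeasure M {x<..} < \<infinity>" for x
    using M(1) by (simp add: finite_measure.emeasure_eq_measure)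
  fix a :: real
  have ramps_eq: "(\<lambda>k. \<integral>y. indicator {0..1} y * max 0 (min 1 (real k * (y - a))) \<partial>M)
      = (\<lambda>k. \<integral>y. indicator {0..1} y * max 0 (min 1 (real k * (y - a))) \<partial>N)"
    by (intro ext integral_continuous_eq_if_moments_eq[OF M(1,2) N(1,2) moments] continuous_intros)
  have "measure M ({0..1} \<inter> {a<..}) = measure N ({0..1} \<inter> {a<..})"
    by (rule LIMSEQ_unique[OF _ integral_indicator_01_ramp_tendsto[OF N(1,2), of a]])
      (use integral_indicator_01_ramp_tendsto[OF M(1,2), of a] ramps_eq in simp)
  moreover have "emeasure K {a<..} = measure K ({0..1} \<inter> {a<..})"
    if "finite_measure K" "sets K = sets borel" "emeasure K (- {0..1}) = 0" for K :: "real measure"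
  proof -
    have "emeasure K ({a<..} - (- {0..1})) = emeasure K {a<..}"
      using that by (intro emeasure_Diff_null_set null_setsI) auto
    moreover have "{a<..} - (- {0..1}) = {0..1} \<inter> {a<..}" by auto
    ultimately show ?thesis using that by (simp add: finite_measure.emeasure_eq_measure)
  qed
  ultimately show "emeasure M {a<..} = emeasure N {a<..}"
    using M N by metis
qed

definition laplace_transform :: "(real \<Rightarrow> ennreal) \<Rightarrow> real \<Rightarrow> ennreal" where
  "laplace_transform P u = (\<integral>\<^sup>+s. indicator {0..} s * ennreal (exp (- u * s)) * P s \<partial>lborel)"

lemma borel_measurable_laplace_transform [measurable]:
  assumes [measurable]: "P \<in> borel_measurable borel"
  shows "laplace_transform P \<in> borel_measurable borel"
  unfolding laplace_transform_def
  by (rule lborel.borel_measurable_nn_integral) measurable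

definition laplace_measure :: "real \<Rightarrow> (real \<Rightarrow> ennreal) \<Rightarrow> real measure" where
  "laplace_measure x0 P =
     distr (density lborel (\<lambda>u. indicator {0..} u * ennreal (exp (- x0 * u)) * P u)) borel (\<lambda>u. exp (- u))"

lemma sets_laplace_measure [simp, measurable_cong]: "sets (laplace_measure x0 P) = sets borel"
  by (simp add: laplace_measure_def)

lemma nn_integral_laplace_measure_power:
  assumes [measurable]: "P \<in> borel_measurable borel"
  shows "(\<integral>\<^sup>+y. ennreal (indicator {0..1} y * y^n) \<partial>laplace_measure x0 P) = laplace_transform P (x0 + real n)"
proof -
  have "(\<integral>\<^sup>+y. ennreal (indicator {0..1} y * y^n) \<partial>laplace_measure x0 P)
      = (\<integral>\<^sup>+u. indicator {0..} u * ennreal (exp (- x0 * u)) * P u * ennreal (indicator {0..1} (exp (- u)) * exp (- u)^n) \<partial>lborel)"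
    unfolding laplace_measure_def by (simp add: nn_integral_distr nn_integral_density)
  also have "\<dots> = laplace_transform P (x0 + real n)"
    unfolding laplace_transform_def
  proof (intro nn_integral_cong)
    fix u :: real
    have "ennreal (exp (- x0 * u)) * ennreal (exp (- u) ^ n) = ennreal (exp (- (x0 + real n) * u))"
      by (simp add: ennreal_mult[symmetric] exp_add[symmetric] exp_of_nat_mult[symmetric] algebra_simps)
    then show "indicator {0..} u * ennreal (exp (- x0 * u)) * P u * ennreal (indicator {0..1} (exp (- u)) * exp (- u)^n)
        = indicator {0..} u * ennreal (exp (- (x0 + real n) * u)) * P u"
      by (cases "0 \<le> u") (auto simp: indicator_def mult_ac)
  qed
  finally show ?thesis .
qed

lemma emeasure_laplace_measure_space:
  assumes [measurable]: "P \<in> borel_measurable borel"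
  shows "emeasure (laplace_measure x0 P) (space (laplace_measure x0 P)) = laplace_transform P x0"
  unfolding laplace_measure_def laplace_transform_def
  by (simp add: emeasure_distr emeasure_density)

lemma emeasure_laplace_measure_outside_01:
  assumes [measurable]: "P \<in> borel_measurable borel"
  shows "emeasure (laplace_measure x0 P) (- {0..1}) = 0"
proof -
  have "(\<lambda>u. exp (- u)) -` (- {0..1}) = {..<0::real}"
    by (auto simp: one_less_exp_iff[symmetric])
  then have "emeasure (laplace_measure x0 P) (- {0..1})
      = (\<integral>\<^sup>+u. indicator {0..} u * ennreal (exp (- x0 * u)) * P u * indicator {..<0} u \<partial>lborel)"
    unfolding laplace_measure_def by (simp add: emeasure_distr emeasure_density)
  also have "\<dots> = (\<integral>\<^sup>+(u::real). 0 \<partial>lborel)"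
    by (intro nn_integral_cong) (simp add: indicator_def)
  finally show ?thesis by simp
qed

lemma distr_laplace_measure_minus_ln:
  assumes [measurable]: "P \<in> borel_measurable borel"
  shows "distr (laplace_measure x0 P) borel (\<lambda>y. - ln y)
    = density lborel (\<lambda>u. indicator {0..} u * ennreal (exp (- x0 * u)) * P u)"
proof -
  have "distr (laplace_measure x0 P) borel (\<lambda>y. - ln y)
      = distr (density lborel (\<lambda>u. indicator {0..} u * ennreal (exp (- x0 * u)) * P u)) borel
          ((\<lambda>y. - ln y) \<circ> (\<lambda>u. exp (- u)))"
    unfolding laplace_measure_def by (rule distr_distr) auto
  also have "(\<lambda>y. - ln y) \<circ> (\<lambda>u. exp (- u)) = (\<lambda>u::real. u)"
    by (auto simp: comp_def)
  finally show ?thesis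
    by (simp add: distr_id2)
qed

lemma laplace_transform_unique:
  assumes [measurable]: "P \<in> borel_measurable borel" "Q \<in> borel_measurable borel"
    and eq: "\<And>n::nat. laplace_transform P (x0 + real n) = laplace_transform Q (x0 + real n)"
    and finite: "laplace_transform P x0 < \<infinity>"
  shows "AE u in lborel. 0 \<le> u \<longrightarrow> P u = Q u"
proof -
  have finite_laplace_measure: "finite_measure (laplace_measure x0 R)"
    if [measurable]: "R \<in> borel_measurable borel" and "laplace_transform R x0 < \<infinity>" for R
    using that by (intro finite_measureI) (simp add: emeasure_laplace_measure_space)
  have PQ_finite: "finite_measure (laplace_measure x0 P)" "finite_measure (laplace_measure x0 Q)"
    using finite eq[of 0] by (auto intro!: finite_laplace_measure)
  have moments: "(\<integral>y. indicator {0..1} y * y^n \<partial>laplace_measure x0 R) = enn2real (laplace_transform R (x0 + real n))"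
    if [measurable]: "R \<in> borel_measurable borel" for R n
    using nn_integral_laplace_measure_power[OF that, of x0 n]
    by (subst integral_eq_nn_integral) (auto simp: indicator_def intro!: AE_I2)
  have "laplace_measure x0 P = laplace_measure x0 Q"
    using PQ_finite by (intro finite_measure_eq_if_moments_eq)
      (simp_all add: emeasure_laplace_measure_outside_01 moments eq)
  then have "density lborel (\<lambda>u. indicator {0..} u * ennreal (exp (- x0 * u)) * P u)
      = density lborel (\<lambda>u. indicator {0..} u * ennreal (exp (- x0 * u)) * Q u)"
    by (metis distr_laplace_measure_minus_ln assms(1,2))
  then have "AE u in lborel. indicator {0..} u * ennreal (exp (- x0 * u)) * P u
      = indicator {0..} u * ennreal (exp (- x0 * u)) * Q u"
    by (intro sigma_finite_measure.density_unique[OF lborel.sigma_finite_measure_axioms]) auto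
  then show ?thesis
    by eventually_elim (auto simp: ennreal_mult_cancel_left mult.assoc)
qed

lemma AE_lborel_not_in_Ioo:
  fixes a b :: real
  assumes "AE x in lborel. x \<notin> {a<..<b}"
  shows "b \<le> a"
proof (rule ccontr)
  assume "\<not> b \<le> a"
  have "emeasure lborel {x \<in> space lborel. x \<in> {a<..<b}} = 0"
    using assms by (rule emeasure_eq_0_AE)
  moreover have "{x \<in> space lborel. x \<in> {a<..<b}} = {a<..<b}"
    by auto
  ultimately show False
    using \<open>\<not> b \<le> a\<close> by simp
qed

lemma ex_progression_if_AE_pos:
  assumes [measurable]: "Measurable.pred borel R" and ae: "AE u in lborel. 0 < u \<longrightarrow> R u"
  shows "\<exists>x0>0. \<forall>n::nat. R (x0 + real n)"
proof (rule ccontr)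
  assume none: "\<not> (\<exists>x0>0. \<forall>n::nat. R (x0 + real n))"
  have "AE x in lborel. 0 < real n + 1 * x \<longrightarrow> R (real n + 1 * x)" for n :: nat
    by (rule AE_borel_affine[where P="\<lambda>u. 0 < u \<longrightarrow> R u"]) (use ae in auto)
  then have "AE x in lborel. \<forall>n::nat. 0 < real n + x \<longrightarrow> R (real n + x)"
    by (simp add: AE_all_countable)
  then have "AE x in lborel. x \<notin> {0<..<1::real}"
    by eventually_elim (use none in \<open>auto simp: add.commute\<close>)
  then show False
    using AE_lborel_not_in_Ioo by fastforce
qed

lemma nn_integral_mult_exp_neg:
  assumes a: "0 < a"
  shows "(\<integral>\<^sup>+u. ennreal (indicator {0..} u * (u * exp (- a * u))) \<partial>lborel) = ennreal (1 / a^2)"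
proof (rule nn_integral_has_integral_lebesgue)
  show "\<And>u. u \<in> {0..} \<Longrightarrow> 0 \<le> u * exp (- a * u)" by simp
  define G where "G u = - (u / a + 1 / a^2) * exp (- a * u)" for u
  have "(G has_real_derivative u * exp (- a * u)) (at u within S)" for u S
  proof -
    have "(G has_real_derivative - (1 / a) * exp (- a * u) + (u / a + 1 / a^2) * (a * exp (- a * u))) (at u within S)"
      unfolding G_def using a by (auto intro!: derivative_eq_intros) (auto simp: algebra_simps)
    moreover have "- (1 / a) * exp (- a * u) + (u / a + 1 / a^2) * (a * exp (- a * u)) = u * exp (- a * u)"
      using a by (simp add: field_simps power2_eq_square)
    ultimately show ?thesis by simp
  qed
  then have "((\<lambda>u. u * exp (- a * u)) has_integral (G y - G 0)) {0..y}" if "0 \<le> y" for y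
    using that by (intro fundamental_theorem_of_calculus)
      (auto simp: has_real_derivative_iff_has_vector_derivative[symmetric])
  then have "\<forall>\<^sub>F y in at_top. integral {0..y} (\<lambda>u. u * exp (- a * u)) = G y - G 0"
    by (intro eventually_at_top_linorderI[of 0]) (simp add: integral_unique)
  moreover have "((\<lambda>y. G y - G 0) \<longlongrightarrow> 1 / a^2) at_top"
    unfolding G_def using a by real_asymp
  ultimately have "((\<lambda>y. integral {0..y} (\<lambda>u. u * exp (- a * u))) \<longlongrightarrow> 1 / a^2) at_top"
    by (simp add: filterlim_cong)
  then show "((\<lambda>u. u * exp (- a * u)) has_integral 1 / a^2) {0..}"
    by (intro has_integral_to_inf integrable_continuous_interval continuous_intros) auto
qed

lemma stieltjes_transform_2_eq_laplace_laplace: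
  assumes [measurable]: "P \<in> borel_measurable borel" and x: "0 < x"
  shows "stieltjes_transform 2 (density lborel P) x = laplace_transform (\<lambda>u. ennreal u * laplace_transform P u) x"
proof -
  define g where "g s u = ennreal (indicator {0..} u * (u * exp (- (s + x) * u))) * (indicator {0..} s * P s)" for s u
  have [measurable]: "case_prod (\<lambda>u s. g s u) \<in> borel_measurable (lborel \<Otimes>\<^sub>M lborel)"
    unfolding g_def by measurable
  have inner: "ennreal (indicator {0..} s / (s + x) powr 2) * P s = (\<integral>\<^sup>+u. g s u \<partial>lborel)" for s
  proof (cases "0 \<le> s")
    case True
    have "(\<integral>\<^sup>+u. g s u \<partial>lborel) = (\<integral>\<^sup>+u. ennreal (indicator {0..} u * (u * exp (- (s + x) * u))) \<partial>lborel) * P s"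
      unfolding g_def using True by (subst nn_integral_multc) auto
    also have "\<dots> = ennreal (1 / (s + x)^2) * P s"
      using True x by (subst nn_integral_mult_exp_neg) auto
    finally show ?thesis using True x by simp
  qed (simp add: g_def)
  have g_split: "g s u = (indicator {0..} u * ennreal (exp (- x * u)) * ennreal u) * (indicator {0..} s * ennreal (exp (- u * s)) * P s)"
    for s u
  proof (cases "0 \<le> u")
    case True
    have "exp (- (s + x) * u) = exp (- x * u) * exp (- u * s)"
      by (simp add: exp_add[symmetric] algebra_simps)
    then show ?thesis
      using True unfolding g_def by (simp add: ennreal_mult mult_ac)
  qed (simp add: g_def)
  have "stieltjes_transform 2 (density lborel P) x = (\<integral>\<^sup>+s. (\<integral>\<^sup>+u. g s u \<partial>lborel) \<partial>lborel)"
    by (simp add: stieltjes_transform_density inner)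
  also have "\<dots> = (\<integral>\<^sup>+u. (\<integral>\<^sup>+s. g s u \<partial>lborel) \<partial>lborel)"
    by (rule lborel_pair.Fubini') measurable
  also have "\<dots> = laplace_transform (\<lambda>u. ennreal u * laplace_transform P u) x"
    unfolding laplace_transform_def g_split
    by (intro nn_integral_cong, subst nn_integral_cmult) (measurable, simp add: mult_ac)
  finally show ?thesis .
qed

lemma stieltjes_transform_2_density_unique:
  assumes [measurable]: "P \<in> borel_measurable borel" "Q \<in> borel_measurable borel"
    and eq: "\<And>x. 0 < x \<Longrightarrow> stieltjes_transform 2 (density lborel P) x = stieltjes_transform 2 (density lborel Q) x"
    and finite: "stieltjes_transform 2 (density lborel P) 1 < \<infinity>"
  shows "AE s in lborel. 0 \<le> s \<longrightarrow> P s = Q s"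
proof -
  have "AE u in lborel. 0 \<le> u \<longrightarrow> ennreal u * laplace_transform P u = ennreal u * laplace_transform Q u"
  proof (rule laplace_transform_unique[of _ _ 1])
    show "laplace_transform (\<lambda>u. ennreal u * laplace_transform P u) (1 + real n) =
          laplace_transform (\<lambda>u. ennreal u * laplace_transform Q u) (1 + real n)" for n
      using eq[of "1 + real n"] by (simp add: stieltjes_transform_2_eq_laplace_laplace)
    show "laplace_transform (\<lambda>u. ennreal u * laplace_transform P u) 1 < \<infinity>"
      using finite by (simp add: stieltjes_transform_2_eq_laplace_laplace)
  qed measurable
  moreover have "AE u in lborel. indicator {0..} u * ennreal (exp (- 1 * u)) * (ennreal u * laplace_transform P u) \<noteq> \<infinity>"
    using finite by (intro nn_integral_PInf_AE)
      (simp_all add: stieltjes_transform_2_eq_laplace_laplace laplace_transform_def)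
  \<comment> \<open>The first pass identifies the inner Laplace transforms only almost everywhere, so the
    second pass runs along a progression \<open>x0 + n\<close> chosen inside the good set.\<close>
  ultimately have "AE u in lborel. 0 < u \<longrightarrow> laplace_transform P u = laplace_transform Q u \<and> laplace_transform P u < \<infinity>"
    by eventually_elim (auto simp: ennreal_mult_cancel_left ennreal_mult_eq_top_iff top.not_eq_extremum)
  moreover have "Measurable.pred borel (\<lambda>u. laplace_transform P u = laplace_transform Q u \<and> laplace_transform P u < \<infinity>)"
    by measurable
  ultimately obtain x0 where
    x0: "\<And>n::nat. laplace_transform P (x0 + real n) = laplace_transform Q (x0 + real n) \<and> laplace_transform P (x0 + real n) < \<infinity>"
    using ex_progression_if_AE_pos by blast
  show ?thesis
    by (rule laplace_transform_unique[of P Q x0]) (use x0[of 0] x0 in auto)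
qed

section \<open>Power kernels\<close>

text \<open>
  Integrating \<open>power_kernel p s\<close> against a measure is the Riemann-Liouville integral of order
  \<open>p + 1\<close>, without the factor \<open>1 / \<Gamma>(p + 1)\<close>.
  In terms of Euler's Beta function, \<open>lowering_constant \<tau> = B(2 - \<tau>, \<tau>)\<close> and
  \<open>beta_constant \<tau> = B(\<tau> - 1, 2 - \<tau>)\<close>; only the finiteness and positivity of the former are used.
\<close>

definition power_kernel :: "real \<Rightarrow> real \<Rightarrow> real \<Rightarrow> ennreal" where
  "power_kernel p s t = ennreal (if 0 \<le> t \<and> t < s then (s - t) powr p else 0)"

lemma borel_measurable_power_kernel [measurable]:
  assumes [measurable]: "f \<in> borel_measurable M" "g \<in> borel_measurable M"
  shows "(\<lambda>x. power_kernel p (f x) (g x)) \<in> borel_measurable M"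
  unfolding power_kernel_def by measurable

definition lowering_constant :: "real \<Rightarrow> ennreal" where
  "lowering_constant \<tau> = (\<integral>\<^sup>+ v. ennreal (indicator {0<..} v * (v powr (1 - \<tau>) / (1 + v)^2)) \<partial>lborel)"

definition beta_constant :: "real \<Rightarrow> ennreal" where
  "beta_constant \<tau> = (\<integral>\<^sup>+ v. ennreal (if 0 < v \<and> v < 1 then (1 - v) powr (\<tau> - 2) * v powr (1 - \<tau>) else 0) \<partial>lborel)"

lemma nn_integral_power_kernel_stieltjes_2:
  assumes x: "0 < x"
  shows "(\<integral>\<^sup>+s. ennreal (indicator {0..} s / (s + x) powr 2) * power_kernel (1 - \<tau>) s t \<partial>lborel)
       = lowering_constant \<tau> * ennreal (indicator {0..} t / (t + x) powr \<tau>)"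
proof (cases "0 \<le> t")
  case False
  then show ?thesis by (simp add: power_kernel_def)
next
  case True
  define c where "c = t + x"
  have c: "0 < c" using True x by (simp add: c_def)
  have rescale: "ennreal (indicator {0..} (t + c * v) / (t + c * v + x) powr 2) * power_kernel (1 - \<tau>) (t + c * v) t
      = ennreal (c powr (- 1 - \<tau>)) * ennreal (indicator {0<..} v * (v powr (1 - \<tau>) / (1 + v)^2))" for v
  proof (cases "0 < v")
    case True
    have "t + c * v + x = c * (1 + v)"
      by (simp add: c_def algebra_simps)
    moreover have "1 / (c * (1 + v))^2 * (c * v) powr (1 - \<tau>) = c powr (- 1 - \<tau>) * (v powr (1 - \<tau>) / (1 + v)^2)"
      using c True powr_diff[of c "1 - \<tau>" 2] by (simp add: powr_mult power_mult_distrib)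
    ultimately show ?thesis
      using c True \<open>0 \<le> t\<close> by (simp add: power_kernel_def ennreal_mult[symmetric] add_nonneg_pos)
  next
    case False
    then have "c * v \<le> 0" using c by (simp add: mult_nonneg_nonpos)
    then show ?thesis using False by (simp add: power_kernel_def)
  qed
  have "(\<integral>\<^sup>+s. ennreal (indicator {0..} s / (s + x) powr 2) * power_kernel (1 - \<tau>) s t \<partial>lborel)
      = ennreal c * (\<integral>\<^sup>+v. ennreal (c powr (- 1 - \<tau>)) * ennreal (indicator {0<..} v * (v powr (1 - \<tau>) / (1 + v)^2)) \<partial>lborel)"
    using c by (subst nn_integral_real_affine[where c=c and t=t]) (simp_all add: rescale)
  also have "\<dots> = ennreal (c * c powr (- 1 - \<tau>)) * lowering_constant \<tau>"
    using c unfolding lowering_constant_def by (subst nn_integral_cmult) (simp_all add: ennreal_mult mult.assoc)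
  also have "c * c powr (- 1 - \<tau>) = 1 / (t + x) powr \<tau>"
    using c powr_add[of c 1 "- 1 - \<tau>"] by (simp add: c_def powr_minus_divide)
  finally show ?thesis
    using True by (simp add: mult.commute)
qed

lemma nn_integral_power_kernel_power_kernel:
  assumes r: "0 < r"
  shows "(\<integral>\<^sup>+s. power_kernel (\<tau> - 2) r s * power_kernel (1 - \<tau>) s t \<partial>lborel)
       = beta_constant \<tau> * indicator {0..<r} t"
proof (cases "0 \<le> t \<and> t < r")
  case False
  then have "(\<lambda>s. power_kernel (\<tau> - 2) r s * power_kernel (1 - \<tau>) s t) = (\<lambda>s. 0)"
    by (auto simp: power_kernel_def)
  then show ?thesis using False by (simp only:) (simp add: indicator_def)
next
  case True
  define c where "c = r - t"
  have c: "0 < c" using True by (simp add: c_def)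
  have rescale: "power_kernel (\<tau> - 2) r (t + c * v) * power_kernel (1 - \<tau>) (t + c * v) t
      = ennreal (1 / c) * ennreal (if 0 < v \<and> v < 1 then (1 - v) powr (\<tau> - 2) * v powr (1 - \<tau>) else 0)" for v
  proof (cases "0 < v \<and> v < 1")
    case True
    have "r - (t + c * v) = c * (1 - v)" "t + c * v < r"
      using c True mult_strict_left_mono[of v 1 c] by (simp_all add: c_def algebra_simps)
    moreover have "(c * (1 - v)) powr (\<tau> - 2) * (c * v) powr (1 - \<tau>)
        = (c powr (\<tau> - 2) * c powr (1 - \<tau>)) * ((1 - v) powr (\<tau> - 2) * v powr (1 - \<tau>))"
      using c True by (simp add: powr_mult mult_ac)
    moreover have "c powr (\<tau> - 2) * c powr (1 - \<tau>) = 1 / c"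
      using c by (simp add: powr_add[symmetric] powr_minus_divide)
    ultimately show ?thesis
      using c True \<open>0 \<le> t \<and> t < r\<close> by (simp add: power_kernel_def ennreal_mult[symmetric])
  next
    case False
    then have "c * v \<le> 0 \<or> c \<le> c * v"
      using c by (auto simp: mult_nonneg_nonpos not_less)
    then have "t + c * v \<le> t \<or> r \<le> t + c * v"
      by (auto simp: c_def)
    then show ?thesis using False by (auto simp: power_kernel_def)
  qed
  have "(\<integral>\<^sup>+s. power_kernel (\<tau> - 2) r s * power_kernel (1 - \<tau>) s t \<partial>lborel)
      = ennreal c * (\<integral>\<^sup>+v. ennreal (1 / c) * ennreal (if 0 < v \<and> v < 1 then (1 - v) powr (\<tau> - 2) * v powr (1 - \<tau>) else 0) \<partial>lborel)"
    using c by (subst nn_integral_real_affine[where c=c and t=t]) (simp_all add: rescale)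
  also have "\<dots> = beta_constant \<tau>"
    using c unfolding beta_constant_def
    by (subst nn_integral_cmult) (simp_all add: mult.assoc[symmetric] ennreal_mult[symmetric])
  finally show ?thesis
    using True by simp
qed

lemma lowering_constant_finite:
  assumes \<tau>: "0 < \<tau>" "\<tau> < 2"
  shows "lowering_constant \<tau> < \<infinity>"
proof -
  have near_0: "(\<integral>\<^sup>+v. ennreal (indicator {0..1} v * v powr (1 - \<tau>)) \<partial>lborel) = ennreal (1 / (2 - \<tau>))"
    using \<tau> has_integral_powr_from_0[of "1 - \<tau>" 1] by (intro nn_integral_has_integral_lebesgue) auto
  have near_inf: "(\<integral>\<^sup>+v. ennreal (indicator {1..} v * v powr (- 1 - \<tau>)) \<partial>lborel) = ennreal (1 / \<tau>)"
    using \<tau> has_integral_powr_to_inf[of "- 1 - \<tau>" 1] by (intro nn_integral_has_integral_lebesgue) auto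
  have "lowering_constant \<tau> \<le> (\<integral>\<^sup>+v. ennreal (indicator {0..1} v * v powr (1 - \<tau>))
      + ennreal (indicator {1..} v * v powr (- 1 - \<tau>)) \<partial>lborel)"
    unfolding lowering_constant_def
  proof (intro nn_integral_mono)
    fix v :: real
    show "ennreal (indicator {0<..} v * (v powr (1 - \<tau>) / (1 + v)^2))
        \<le> ennreal (indicator {0..1} v * v powr (1 - \<tau>)) + ennreal (indicator {1..} v * v powr (- 1 - \<tau>))"
    proof (cases "0 < v")
      case v: True
      show ?thesis
      proof (cases "v \<le> 1")
        case True
        have "1 \<le> (1 + v)^2" using v by simp
        then have "v powr (1 - \<tau>) / (1 + v)^2 \<le> v powr (1 - \<tau>)"
          by (simp add: divide_le_eq mult_le_cancel_left1 less_le_trans[OF zero_less_one])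
        then show ?thesis using v True by (simp add: indicator_def add_increasing2 ennreal_leI)
      next
        case False
        have "v powr (1 - \<tau>) / (1 + v)^2 \<le> v powr (1 - \<tau>) / v^2"
          using v by (intro divide_left_mono) (auto intro!: power_mono)
        also have "\<dots> = v powr (- 1 - \<tau>)"
          using v powr_diff[of v "1 - \<tau>" 2] by simp
        finally show ?thesis using v False by (simp add: indicator_def add_increasing ennreal_leI)
      qed
    qed simp
  qed
  also have "\<dots> < \<infinity>"
    by (subst nn_integral_add) (simp_all add: near_0 near_inf)
  finally show ?thesis .
qed

lemma lowering_constant_pos: "0 < lowering_constant \<tau>"
proof (rule ccontr)
  assume "\<not> 0 < lowering_constant \<tau>"
  then have "lowering_constant \<tau> = 0"
    by simp
  moreover have "(\<lambda>v. ennreal (indicator {0<..} v * (v powr (1 - \<tau>) / (1 + v)^2))) \<in> borel_measurable lborel"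
    by measurable
  ultimately have "AE v in lborel. ennreal (indicator {0<..} v * (v powr (1 - \<tau>) / (1 + v)^2)) = 0"
    unfolding lowering_constant_def by (simp only: nn_integral_0_iff_AE)
  then have "AE v in lborel. v \<notin> {0<..<1::real}"
    by eventually_elim (auto simp: indicator_def)
  then show False
    using AE_lborel_not_in_Ioo by fastforce
qed

definition power_kernel_integral :: "real \<Rightarrow> real measure \<Rightarrow> real \<Rightarrow> ennreal" where
  "power_kernel_integral p \<nu> s = (\<integral>\<^sup>+t. power_kernel p s t \<partial>\<nu>)"

lemma borel_measurable_power_kernel_integral [measurable]:
  assumes "sigma_finite_measure \<nu>" "sets \<nu> = sets borel"
  shows "power_kernel_integral p \<nu> \<in> borel_measurable borel"
proof -
  have [measurable_cong]: "sets (borel \<Otimes>\<^sub>M \<nu>) = sets (borel \<Otimes>\<^sub>M borel)"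
    by (intro sets_pair_measure_cong assms(2)) simp
  show ?thesis
    unfolding power_kernel_integral_def
    by (rule sigma_finite_measure.borel_measurable_nn_integral[OF assms(1)]) measurable
qed

lemma power_kernel_integral_nonpos:
  assumes "s \<le> 0"
  shows "power_kernel_integral p \<nu> s = 0"
proof -
  have "power_kernel p s t = 0" for t
    using assms by (simp add: power_kernel_def)
  then show ?thesis by (simp add: power_kernel_integral_def)
qed

lemma mono_power_kernel_integral:
  assumes "0 \<le> p"
  shows "mono (power_kernel_integral p \<nu>)"
proof (intro monoI)
  fix s1 s2 :: real assume "s1 \<le> s2"
  then have "power_kernel p s1 t \<le> power_kernel p s2 t" for t
    using assms by (auto simp: power_kernel_def intro!: ennreal_leI powr_mono2)
  then show "power_kernel_integral p \<nu> s1 \<le> power_kernel_integral p \<nu> s2"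
    unfolding power_kernel_integral_def by (intro nn_integral_mono)
qed

lemma stieltjes_transform_2_power_kernel_integral:
  assumes \<nu>: "sigma_finite_measure \<nu>" "sets \<nu> = sets borel" and x: "0 < x"
  shows "stieltjes_transform 2 (density lborel (power_kernel_integral (1 - \<tau>) \<nu>)) x
    = lowering_constant \<tau> * stieltjes_transform \<tau> \<nu> x"
proof -
  interpret pair_sigma_finite \<nu> lborel
    by (simp add: pair_sigma_finite_def assms lborel.sigma_finite_measure_axioms)
  have [measurable_cong]: "sets (\<nu> \<Otimes>\<^sub>M lborel) = sets (borel \<Otimes>\<^sub>M borel)"
    by (intro sets_pair_measure_cong \<nu>(2)) simp
  have [measurable_cong]: "sets \<nu> = sets borel" by (fact \<nu>(2))
  define k where "k s = ennreal (indicator {0..} s / (s + x) powr 2)" for s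
  have "stieltjes_transform 2 (density lborel (power_kernel_integral (1 - \<tau>) \<nu>)) x
      = (\<integral>\<^sup>+s. (\<integral>\<^sup>+t. k s * power_kernel (1 - \<tau>) s t \<partial>\<nu>) \<partial>lborel)"
    using \<nu> unfolding k_def power_kernel_integral_def[abs_def]
    by (subst stieltjes_transform_density) (auto intro!: nn_integral_cong nn_integral_cmult[symmetric])
  also have "\<dots> = (\<integral>\<^sup>+t. (\<integral>\<^sup>+s. k s * power_kernel (1 - \<tau>) s t \<partial>lborel) \<partial>\<nu>)"
    by (rule Fubini') (unfold k_def, measurable)
  also have "\<dots> = (\<integral>\<^sup>+t. lowering_constant \<tau> * ennreal (indicator {0..} t / (t + x) powr \<tau>) \<partial>\<nu>)"
    unfolding k_def by (intro nn_integral_cong nn_integral_power_kernel_stieltjes_2 x)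
  also have "\<dots> = lowering_constant \<tau> * stieltjes_transform \<tau> \<nu> x"
    unfolding stieltjes_transform_def by (rule nn_integral_cmult) measurable
  finally show ?thesis .
qed

lemma power_kernel_integral_power_kernel_integral:
  assumes \<nu>: "sigma_finite_measure \<nu>" "sets \<nu> = sets borel" and r: "0 < r"
  shows "power_kernel_integral (\<tau> - 2) (density lborel (power_kernel_integral (1 - \<tau>) \<nu>)) r
    = beta_constant \<tau> * emeasure \<nu> {0..<r}"
proof -
  interpret pair_sigma_finite \<nu> lborel
    by (simp add: pair_sigma_finite_def assms lborel.sigma_finite_measure_axioms)
  have [measurable_cong]: "sets (\<nu> \<Otimes>\<^sub>M lborel) = sets (borel \<Otimes>\<^sub>M borel)"
    by (intro sets_pair_measure_cong \<nu>(2)) simp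
  have [measurable_cong]: "sets \<nu> = sets borel" by (fact \<nu>(2))
  have "power_kernel_integral (\<tau> - 2) (density lborel (power_kernel_integral (1 - \<tau>) \<nu>)) r
      = (\<integral>\<^sup>+s. power_kernel_integral (1 - \<tau>) \<nu> s * power_kernel (\<tau> - 2) r s \<partial>lborel)"
    using \<nu> unfolding power_kernel_integral_def[of "\<tau> - 2"] by (subst nn_integral_density) auto
  also have "\<dots> = (\<integral>\<^sup>+s. (\<integral>\<^sup>+t. power_kernel (\<tau> - 2) r s * power_kernel (1 - \<tau>) s t \<partial>\<nu>) \<partial>lborel)"
    unfolding power_kernel_integral_def
    by (intro nn_integral_cong, subst nn_integral_cmult) (measurable, simp add: mult.commute)
  also have "\<dots> = (\<integral>\<^sup>+t. (\<integral>\<^sup>+s. power_kernel (\<tau> - 2) r s * power_kernel (1 - \<tau>) s t \<partial>lborel) \<partial>\<nu>)"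
    by (rule Fubini') measurable
  also have "\<dots> = (\<integral>\<^sup>+t. beta_constant \<tau> * indicator {0..<r} t \<partial>\<nu>)"
    by (intro nn_integral_cong nn_integral_power_kernel_power_kernel r)
  also have "\<dots> = beta_constant \<tau> * emeasure \<nu> {0..<r}"
    using \<nu> by (intro nn_integral_cmult_indicator) auto
  finally show ?thesis .
qed

lemma sigma_finite_if_stieltjes_transform_finite:
  assumes \<nu>: "sets \<nu> = sets borel" "emeasure \<nu> {..<0} = 0" and \<tau>: "0 \<le> \<tau>"
    and finite: "stieltjes_transform \<tau> \<nu> 1 < \<infinity>"
  shows "sigma_finite_measure \<nu>"
proof
  have "emeasure \<nu> {..real n} \<noteq> \<infinity>" for n :: nat
  proof -
    have "ennreal ((real n + 1) powr (- \<tau>)) * emeasure \<nu> {0..real n}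
        = (\<integral>\<^sup>+t. ennreal ((real n + 1) powr (- \<tau>)) * indicator {0..real n} t \<partial>\<nu>)"
      using \<nu> by (subst nn_integral_cmult_indicator) auto
    also have "\<dots> \<le> stieltjes_transform \<tau> \<nu> 1"
      unfolding stieltjes_transform_def
    proof (intro nn_integral_mono)
      fix t :: real
      show "ennreal ((real n + 1) powr (- \<tau>)) * indicator {0..real n} t \<le> ennreal (indicator {0..} t / (t + 1) powr \<tau>)"
      proof (cases "t \<in> {0..real n}")
        case True
        then have "(real n + 1) powr (- \<tau>) \<le> (t + 1) powr (- \<tau>)"
          using \<tau> by (intro powr_mono2') auto
        then show ?thesis using True by (simp add: indicator_def powr_minus divide_simps ennreal_leI)
      qed simp
    qed
    also note finite
    finally have "emeasure \<nu> {0..real n} < \<infinity>"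
      by (auto simp: ennreal_mult_less_top)
    have "{..real n} = {..<0} \<union> {0..real n}"
      by auto
    then have "emeasure \<nu> {..real n} \<le> emeasure \<nu> {..<0} + emeasure \<nu> {0..real n}"
      using \<nu>(1) emeasure_subadditive[of "{..<0}" \<nu> "{0..real n}"] by simp
    with \<open>emeasure \<nu> {0..real n} < \<infinity>\<close> show ?thesis
      using \<nu>(2) by (auto simp: top.not_eq_extremum)
  qed
  moreover have "\<Union> (range (\<lambda>n::nat. {..real n})) = space \<nu>"
    using sets_eq_imp_space_eq[OF \<nu>(1)] real_arch_simple by auto
  ultimately show "\<exists>A. countable A \<and> A \<subseteq> sets \<nu> \<and> \<Union> A = space \<nu> \<and> (\<forall>a\<in>A. emeasure \<nu> a \<noteq> \<infinity>)"
    using \<nu>(1) by (intro exI[of _ "range (\<lambda>n::nat. {..real n})"]) auto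
qed

section \<open>Exclusion of the orders below 2\<close>

definition tent_power_integral :: "real \<Rightarrow> real \<Rightarrow> real \<Rightarrow> real" where
  "tent_power_integral l a r = (1 - l) * (- r * (r - l) powr a / a + (r - l) powr (a + 1) / (a + 1) + r * r powr a / a - r powr (a + 1) / (a + 1))
     + l * ((1 - r) * (r - l) powr a / a + (r - l) powr (a + 1) / (a + 1))"

lemma tent_power_integral_has_integral:
  assumes l: "0 < l" "l < 1" and r: "l < r" "r \<le> 1" and a: "0 < a"
  shows "((\<lambda>s. (r - s) powr (a - 1) * tent l s) has_integral tent_power_integral l a r) {0..r}"
proof -
  define G1 where "G1 s = - r * (r - s) powr a / a + (r - s) powr (a + 1) / (a + 1)" for s
  define G2 where "G2 s = - (1 - r) * (r - s) powr a / a - (r - s) powr (a + 1) / (a + 1)" for s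
  have pw: "(r - s) powr a = (r - s) * (r - s) powr (a - 1)" if "s < r" for s
    using that powr_mult_base[of "r - s" "a - 1"] by simp
  have "(G1 has_real_derivative s * (r - s) powr (a - 1)) (at s within {0..l})" if "s \<in> {0..l}" for s
  proof -
    have "s < r" using that r by simp
    have "(G1 has_real_derivative r * (r - s) powr (a - 1) - (r - s) powr a) (at s within {0..l})"
      unfolding G1_def using that r a by (auto intro!: derivative_eq_intros; auto simp: field_simps)
    moreover have "r * (r - s) powr (a - 1) - (r - s) powr a = s * (r - s) powr (a - 1)"
      unfolding pw[OF \<open>s < r\<close>] by (simp add: algebra_simps)
    ultimately show ?thesis by simp
  qed
  then have "((\<lambda>s. s * (r - s) powr (a - 1)) has_integral G1 l - G1 0) {0..l}"
    using l by (intro fundamental_theorem_of_calculus)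
      (auto simp: has_real_derivative_iff_has_vector_derivative[symmetric])
  from has_integral_mult_right[OF this, of "1 - l"]
  have i1: "((\<lambda>s. (r - s) powr (a - 1) * tent l s) has_integral (1 - l) * (G1 l - G1 0)) {0..l}"
    by (rule has_integral_eq[rotated]) (auto simp: tent_def)
  have "(G2 has_real_derivative (1 - s) * (r - s) powr (a - 1)) (at s)" if "s \<in> {l<..<r}" for s
  proof -
    have "(G2 has_real_derivative (1 - r) * (r - s) powr (a - 1) + (r - s) powr a) (at s)"
      unfolding G2_def using that a by (auto intro!: derivative_eq_intros; auto simp: field_simps)
    moreover have "s < r" using that by simp
    then have "(1 - r) * (r - s) powr (a - 1) + (r - s) powr a = (1 - s) * (r - s) powr (a - 1)"
      unfolding pw[OF \<open>s < r\<close>] by (simp add: algebra_simps)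
    ultimately show ?thesis by simp
  qed
  moreover have "continuous_on {l..r} G2"
    unfolding G2_def using a by (intro continuous_intros continuous_on_powr') auto
  ultimately have "((\<lambda>s. (1 - s) * (r - s) powr (a - 1)) has_integral G2 r - G2 l) {l..r}"
    using r by (intro fundamental_theorem_of_calculus_interior)
      (auto simp: has_real_derivative_iff_has_vector_derivative[symmetric])
  from has_integral_mult_right[OF this, of l]
  have i2: "((\<lambda>s. (r - s) powr (a - 1) * tent l s) has_integral l * (G2 r - G2 l)) {l..r}"
    by (rule has_integral_eq[rotated]) (auto simp: tent_def)
  have "((\<lambda>s. (r - s) powr (a - 1) * tent l s) has_integral (1 - l) * (G1 l - G1 0) + l * (G2 r - G2 l)) {0..r}"
    using l r by (intro has_integral_combine[OF _ _ i1 i2]) auto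
  moreover have "(1 - l) * (G1 l - G1 0) + l * (G2 r - G2 l) = tent_power_integral l a r"
    using a unfolding G1_def G2_def tent_power_integral_def by (simp add: divide_simps; algebra)
  ultimately show ?thesis by simp
qed

lemma tent_power_integral_decreases_at_1:
  assumes l: "0 < l" "l < 1" and a: "0 < a" "a < 1"
  obtains r where "l < r" "r < 1" "tent_power_integral l a 1 < tent_power_integral l a r"
proof -
  define \<mu> where "\<mu> = 1 - l"
  have \<mu>: "0 < \<mu>" "\<mu> < 1" using l by (auto simp: \<mu>_def)
  define D where "D = \<mu> * (- (\<mu> powr a + a * \<mu> powr (a - 1)) / a + \<mu> powr a + (1 + a) / a - 1)
      + (1 - \<mu>) * (- (\<mu> powr a) / a + \<mu> powr a)"
  have pw: "\<mu> powr a = \<mu> * \<mu> powr (a - 1)"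
    using powr_mult_base[of \<mu> "a - 1"] \<mu> by simp
  have deriv: "(tent_power_integral l a has_real_derivative D) (at 1)"
    unfolding tent_power_integral_def D_def \<mu>_def using l a
    by (auto intro!: derivative_eq_intros; auto simp: field_simps)
  have "D = (\<mu> - \<mu> powr a) / a"
    using a unfolding D_def pw by (simp add: divide_simps; algebra)
  then have "D < 0"
    using \<mu> a powr_less_mono'[of \<mu> a 1] by (simp add: divide_neg_pos)
  then obtain d where "d > 0" and d: "\<And>h. 0 < h \<Longrightarrow> h < d \<Longrightarrow> tent_power_integral l a 1 < tent_power_integral l a (1 - h)"
    using DERIV_neg_dec_left[OF deriv] by blast
  define h where "h = min (d / 2) ((1 - l) / 2)"
  have "h \<le> d / 2" "h \<le> (1 - l) / 2"
    unfolding h_def by (rule min.cobounded1, rule min.cobounded2)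
  moreover have "0 < h"
    using \<open>d > 0\<close> l by (simp add: h_def)
  ultimately have "0 < h" "h < d" "l < 1 - h"
    using \<open>d > 0\<close> l by (simp_all add: field_simps)
  then show ?thesis
    using that[of "1 - h"] d[of h] by simp
qed

lemma power_kernel_integral_sawtooth:
  assumes l: "0 < l" "l < 1" and r: "l < r" "r \<le> 1" and a: "0 < a" "a < 1" and b: "0 \<le> b"
  shows "power_kernel_integral (a - 1) (density lborel (\<lambda>s. ennreal (b * sawtooth l s))) r
    = ennreal (b * tent_power_integral l a r)"
proof -
  have "power_kernel_integral (a - 1) (density lborel (\<lambda>s. ennreal (b * sawtooth l s))) r
      = (\<integral>\<^sup>+s. ennreal b * ennreal (indicator {0..r} s * ((r - s) powr (a - 1) * tent l s)) \<partial>lborel)"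
    unfolding power_kernel_integral_def
  proof (subst nn_integral_density, measurable, intro nn_integral_cong)
    fix s :: real
    show "ennreal (b * sawtooth l s) * power_kernel (a - 1) r s
        = ennreal b * ennreal (indicator {0..r} s * ((r - s) powr (a - 1) * tent l s))"
    proof (cases "0 \<le> s \<and> s < r")
      case True
      then have "sawtooth l s = tent l s" and "0 \<le> tent l s"
        using r l by (auto intro!: sawtooth_eq_tent tent_nonneg)
      then show ?thesis
        using True b by (simp add: power_kernel_def ennreal_mult'[symmetric] mult_ac)
    qed (auto simp: power_kernel_def indicator_def)
  qed
  also have "\<dots> = ennreal b * ennreal (tent_power_integral l a r)"
    using l r a
    by (subst nn_integral_cmult, measurable,
        subst nn_integral_has_integral_lebesgue[OF _ tent_power_integral_has_integral])
       (auto intro!: mult_nonneg_nonneg tent_nonneg)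
  finally show ?thesis
    using b by (simp add: ennreal_mult')
qed

lemma power_kernel_integral_sawtooth_not_mono:
  assumes l: "0 < l" "l < 1" and a: "0 < a" "a < 1" and b: "0 < b"
  shows "\<not> mono_on {0<..} (power_kernel_integral (a - 1) (density lborel (\<lambda>s. ennreal (b * sawtooth l s))))"
proof
  assume mono: "mono_on {0<..} (power_kernel_integral (a - 1) (density lborel (\<lambda>s. ennreal (b * sawtooth l s))))"
  obtain r where r: "l < r" "r < 1" "tent_power_integral l a 1 < tent_power_integral l a r"
    using tent_power_integral_decreases_at_1[OF l a] .
  have "0 \<le> tent_power_integral l a 1"
    using l a by (intro has_integral_nonneg[OF tent_power_integral_has_integral])
      (auto intro!: mult_nonneg_nonneg tent_nonneg)
  moreover have "ennreal (b * tent_power_integral l a r) \<le> ennreal (b * tent_power_integral l a 1)"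
    using mono_onD[OF mono, of r 1] r l a b by (simp add: power_kernel_integral_sawtooth)
  ultimately have "tent_power_integral l a r \<le> tent_power_integral l a 1"
    using b by (simp add: ennreal_le_iff)
  with r show False by simp
qed

lemma nn_integral_interval_le_if_mono:
  fixes V :: "real \<Rightarrow> ennreal"
  assumes "mono V" "0 \<le> d" "a + d \<le> c"
  shows "(\<integral>\<^sup>+s. indicator {a..a + d} s * V s \<partial>lborel) \<le> (\<integral>\<^sup>+s. indicator {c..c + d} s * V s \<partial>lborel)"
proof -
  have "(\<integral>\<^sup>+s. indicator {a..a + d} s * V s \<partial>lborel) \<le> (\<integral>\<^sup>+s. V (a + d) * indicator {a..a + d} s \<partial>lborel)"
    using assms(1) by (intro nn_integral_mono) (auto simp: indicator_def mono_def)
  also have "\<dots> \<le> (\<integral>\<^sup>+s. V c * indicator {c..c + d} s \<partial>lborel)"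
    using assms by (simp add: nn_integral_cmult_indicator mult_right_mono monoD)
  also have "\<dots> \<le> (\<integral>\<^sup>+s. indicator {c..c + d} s * V s \<partial>lborel)"
    using assms(1) by (intro nn_integral_mono) (auto simp: indicator_def mono_def)
  finally show ?thesis .
qed

lemma mono_not_AE_eq_sawtooth:
  fixes V :: "real \<Rightarrow> ennreal"
  assumes l: "0 < l" "l < 1" and V: "mono V" and b: "0 < b"
  shows "\<not> (AE s in lborel. V s = ennreal (b * sawtooth l s))"
proof
  assume ae: "AE s in lborel. V s = ennreal (b * sawtooth l s)"
  define d where "d = l * (1 - l) / 2"
  have d: "0 < d" "d < l" "l < 1 - d"
    using l mult_strict_left_mono[of "1 - l" 2 l] mult_strict_right_mono[of l 2 "1 - l"]
    by (auto simp: d_def)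
  have integral_eq: "(\<integral>\<^sup>+s. indicator {a..a + d} s * V s \<partial>lborel)
      = (\<integral>\<^sup>+s. indicator {a..a + d} s * ennreal (b * sawtooth l s) \<partial>lborel)" for a
    using ae by (intro nn_integral_cong_AE) auto
  have "ennreal (b * ((1 - l) * (l - d))) * ennreal d
      = (\<integral>\<^sup>+s. ennreal (b * ((1 - l) * (l - d))) * indicator {l - d..l - d + d} s \<partial>lborel)"
    using d by (simp add: nn_integral_cmult_indicator)
  also have "\<dots> \<le> (\<integral>\<^sup>+s. indicator {l - d..l - d + d} s * V s \<partial>lborel)"
    unfolding integral_eq using l d b
    by (intro nn_integral_mono)
      (auto simp: indicator_def sawtooth_rising intro!: ennreal_leI mult_left_mono)
  also have "\<dots> \<le> (\<integral>\<^sup>+s. indicator {1 - d..1 - d + d} s * V s \<partial>lborel)"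
    using d by (intro nn_integral_interval_le_if_mono V) auto
  also have "\<dots> \<le> (\<integral>\<^sup>+s. ennreal (b * (l * d)) * indicator {1 - d..1 - d + d} s \<partial>lborel)"
    unfolding integral_eq using l d b
    by (intro nn_integral_mono)
      (auto simp: indicator_def sawtooth_falling intro!: ennreal_leI mult_left_mono)
  also have "\<dots> = ennreal (b * (l * d)) * ennreal d"
    using d by (simp add: nn_integral_cmult_indicator)
  finally have "b * ((1 - l) * (l - d)) * d \<le> b * (l * d) * d"
    using l d b by (simp add: ennreal_mult'[symmetric] ennreal_le_iff)
  then have "(1 - l) * (l - d) \<le> l * d"
    using b d by simp
  moreover have "(1 - l) * (l - d) = l * d + d"
    by (simp add: d_def field_simps)
  ultimately show False
    using d by simp
qed

lemma gen_stieltjes_ln_g_lam_representation: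
  assumes l: "0 < l" "l < 1" and \<tau>: "0 \<le> \<tau>" and mem: "(\<lambda>x. ln (g_lam l x)) \<in> gen_stieltjes \<tau>"
  obtains \<nu> where "sets \<nu> = sets borel" "sigma_finite_measure \<nu>"
    "\<And>x. 0 < x \<Longrightarrow> stieltjes_transform \<tau> \<nu> x = ennreal (ln (g_lam l x))"
proof -
  obtain \<nu> c where \<nu>: "sets \<nu> = sets borel" "emeasure \<nu> {..<0} = 0" and "0 \<le> c"
    and rep: "\<And>x. 0 < x \<Longrightarrow> c \<le> ln (g_lam l x) \<and> stieltjes_transform \<tau> \<nu> x = ennreal (ln (g_lam l x) - c)"
    using mem unfolding gen_stieltjes_iff_stieltjes_transform by blast
  have "c = 0"
  proof (rule ccontr)
    assume "c \<noteq> 0"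
    with \<open>0 \<le> c\<close> have "0 < c" by simp
    then have "c \<le> ln (g_lam l (2 / c))" using rep by simp
    also have "\<dots> \<le> c / 2" using ln_g_lam_le_inverse[OF l, of "2 / c"] \<open>0 < c\<close> by simp
    finally show False using \<open>0 < c\<close> by simp
  qed
  with rep have rep: "\<And>x. 0 < x \<Longrightarrow> stieltjes_transform \<tau> \<nu> x = ennreal (ln (g_lam l x))"
    by simp
  then have "sigma_finite_measure \<nu>"
    using \<nu> \<tau> rep[of 1] by (intro sigma_finite_if_stieltjes_transform_finite) auto
  then show thesis using that \<nu> rep by blast
qed

lemma power_kernel_integral_AE_eq_sawtooth:
  assumes l: "0 < l" "l < 1" and \<tau>: "0 < \<tau>" "\<tau> < 2"
    and \<nu>: "sets \<nu> = sets borel" "sigma_finite_measure \<nu>"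
    and rep: "\<And>x. 0 < x \<Longrightarrow> stieltjes_transform \<tau> \<nu> x = ennreal (ln (g_lam l x))"
  shows "AE s in lborel. power_kernel_integral (1 - \<tau>) \<nu> s = lowering_constant \<tau> * ennreal (sawtooth l s)"
proof -
  have same_transform: "stieltjes_transform 2 (density lborel (power_kernel_integral (1 - \<tau>) \<nu>)) x
      = stieltjes_transform 2 (density lborel (\<lambda>s. lowering_constant \<tau> * ennreal (sawtooth l s))) x"
    if "0 < x" for x
    using that l \<nu> by (simp add: stieltjes_transform_2_power_kernel_integral rep
        stieltjes_transform_density_cmult stieltjes_transform_sawtooth)
  have "AE s in lborel. 0 \<le> s \<longrightarrow> power_kernel_integral (1 - \<tau>) \<nu> s = lowering_constant \<tau> * ennreal (sawtooth l s)"
  proof (rule stieltjes_transform_2_density_unique)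
    show "stieltjes_transform 2 (density lborel (power_kernel_integral (1 - \<tau>) \<nu>)) 1 < \<infinity>"
      using same_transform[of 1] lowering_constant_finite[OF \<tau>] l
      by (simp add: stieltjes_transform_density_cmult stieltjes_transform_sawtooth ennreal_mult_less_top)
  qed (use \<nu> same_transform in simp_all)
  then show ?thesis
    by eventually_elim (auto simp: power_kernel_integral_nonpos sawtooth_def)
qed

lemma ln_g_lam_not_in_gen_stieltjes:
  assumes l: "0 < l" "l < 1" and \<tau>: "0 < \<tau>" "\<tau> < 2"
  shows "(\<lambda>x. ln (g_lam l x)) \<notin> gen_stieltjes \<tau>"
proof
  assume "(\<lambda>x. ln (g_lam l x)) \<in> gen_stieltjes \<tau>"
  then obtain \<nu> where \<nu>: "sets \<nu> = sets borel" "sigma_finite_measure \<nu>"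
    and rep: "\<And>x. 0 < x \<Longrightarrow> stieltjes_transform \<tau> \<nu> x = ennreal (ln (g_lam l x))"
    using gen_stieltjes_ln_g_lam_representation[OF l] \<tau> by (metis less_imp_le)
  obtain b where b: "lowering_constant \<tau> = ennreal b" "0 < b"
    using lowering_constant_finite[OF \<tau>] lowering_constant_pos[of \<tau>] by (cases "lowering_constant \<tau>") auto
  define V where "V = power_kernel_integral (1 - \<tau>) \<nu>"
  have "AE s in lborel. V s = lowering_constant \<tau> * ennreal (sawtooth l s)"
    unfolding V_def by (rule power_kernel_integral_AE_eq_sawtooth[OF l \<tau> \<nu> rep])
  then have ae: "AE s in lborel. V s = ennreal (b * sawtooth l s)"
    by eventually_elim (use b in \<open>simp add: ennreal_mult'\<close>)
  show False
  proof (cases "\<tau> \<le> 1")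
    case True
    then have "mono V"
      unfolding V_def by (intro mono_power_kernel_integral) simp
    then show False
      using mono_not_AE_eq_sawtooth[OF l _ b(2)] ae by blast
  next
    case False
    have "density lborel V = density lborel (\<lambda>s. ennreal (b * sawtooth l s))"
      using ae \<nu> unfolding V_def by (intro density_cong) auto
    moreover have "mono_on {0<..} (power_kernel_integral (\<tau> - 2) (density lborel V))"
      using \<nu> unfolding V_def
      by (intro mono_onI) (simp add: power_kernel_integral_power_kernel_integral emeasure_mono mult_left_mono)
    ultimately show False
      using power_kernel_integral_sawtooth_not_mono[OF l, of "\<tau> - 1" b] \<tau> False b by simp
  qed
qed

theorem proposition3p2:
  fixes l :: real
  assumes "0 < l" and "l < 1"
  shows "(\<lambda>x. ln (g_lam l x)) \<in> gen_stieltjes 2 \<and>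
         (\<forall>\<tau>\<in>{0<..<2}. (\<lambda>x. ln (g_lam l x)) \<notin> gen_stieltjes \<tau>)"
  using assms ln_g_lam_in_gen_stieltjes_2 ln_g_lam_not_in_gen_stieltjes by auto

end
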